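(* Let $G$ be a line graph, let $D^*$ be a minimal dominating set of $G$, let $v$ be an isolated vertex of $G[D^*]$, and let $u$ be a neighbor of $v$. Write $\{x_1,\ldots,x_k\}=P_{D^*}(v)\setminus N[u]$ and $U=N[u]\cup\bigcup_{i=1}^k\big((N[x_i]\setminus N[v])\cup\{x_i\}\big)$. Then for any set $Z=\{z_1,\ldots,z_k\}$ with $z_i\in N(x_i)\setminus N[v]$ for each $i\in\{1,\ldots,k\}$, we have $U\subseteq N[Z\cup\{u\}]$.
   Context: Graphs are finite, simple, undirected; $N(x)$ is the open and $N[x]=N(x)\cup\{x\}$ the closed neighborhood, $N[S]=\bigcup_{x\in S}N[x]$. A line graph is a graph isomorphic to $L(H)$ for some graph $H$ ($L(H)$ has vertex set $E(H)$, adjacency = sharing an endpoint). A dominating set is $D\subseteq V(G)$ with $N[D]=V(G)$; minimal if no proper subset is dominating. For a dominating set $D$ and $x\in D$, $P_D(x)=N(x)\setminus N[D\setminus\{x\}]$ is the set of private neighbors of $x$. *)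

theory Defs
  imports Main
begin

definition simple_graph :: "'a set \<Rightarrow> ('a \<Rightarrow> 'a \<Rightarrow> bool) \<Rightarrow> bool" where
  "simple_graph V E \<longleftrightarrow> finite V \<and> (\<forall>x y. E x y \<longrightarrow> x \<in> V \<and> y \<in> V)
     \<and> (\<forall>x y. E x y \<longrightarrow> E y x) \<and> (\<forall>x. \<not> E x x)"

text \<open>f is an isomorphism from G = (V,E) onto the line graph L(H) of the simple graph H
  whose edges are the 2-element sets f ` V (vertices of H: their union).\<close>
definition line_graph_iso :: "'a set \<Rightarrow> ('a \<Rightarrow> 'a \<Rightarrow> bool) \<Rightarrow> ('a \<Rightarrow> 'b set) \<Rightarrow> bool" where
  "line_graph_iso V E f \<longleftrightarrow> inj_on f V \<and> (\<forall>x\<in>V. card (f x) = 2)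
     \<and> (\<forall>x\<in>V. \<forall>y\<in>V. E x y \<longleftrightarrow> (x \<noteq> y \<and> f x \<inter> f y \<noteq> {}))"

definition open_nbhd :: "'a set \<Rightarrow> ('a \<Rightarrow> 'a \<Rightarrow> bool) \<Rightarrow> 'a \<Rightarrow> 'a set" where
  "open_nbhd V E x = {y \<in> V. E x y}"

definition closed_nbhd :: "'a set \<Rightarrow> ('a \<Rightarrow> 'a \<Rightarrow> bool) \<Rightarrow> 'a \<Rightarrow> 'a set" where
  "closed_nbhd V E x = insert x (open_nbhd V E x)"

definition closed_nbhd_set :: "'a set \<Rightarrow> ('a \<Rightarrow> 'a \<Rightarrow> bool) \<Rightarrow> 'a set \<Rightarrow> 'a set" where
  "closed_nbhd_set V E S = (\<Union>x\<in>S. closed_nbhd V E x)"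

definition dominating :: "'a set \<Rightarrow> ('a \<Rightarrow> 'a \<Rightarrow> bool) \<Rightarrow> 'a set \<Rightarrow> bool" where
  "dominating V E D \<longleftrightarrow> D \<subseteq> V \<and> closed_nbhd_set V E D = V"

definition minimal_dominating :: "'a set \<Rightarrow> ('a \<Rightarrow> 'a \<Rightarrow> bool) \<Rightarrow> 'a set \<Rightarrow> bool" where
  "minimal_dominating V E D \<longleftrightarrow> dominating V E D \<and> (\<forall>D'. D' \<subset> D \<longrightarrow> \<not> dominating V E D')"

definition private_nbrs :: "'a set \<Rightarrow> ('a \<Rightarrow> 'a \<Rightarrow> bool) \<Rightarrow> 'a set \<Rightarrow> 'a \<Rightarrow> 'a set" where
  "private_nbrs V E D x = open_nbhd V E x - closed_nbhd_set V E (D - {x})"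

end

theory Submission
  imports Defs
begin

text \<open>If the edge \<open>x\<close> of \<open>H\<close> meets the edge \<open>v\<close> in one endpoint, every edge meeting \<open>x\<close> but not
  \<open>v\<close> passes through the other endpoint of \<open>x\<close>. Hence \<open>(N[x] \<setminus> N[v]) \<union> {x}\<close> is a clique of the
  line graph, dominated by any one of its members \<open>z \<noteq> x\<close>. Only \<open>x \<in> N(v)\<close> is used of the
  private neighbours.\<close>

lemma card_2_meets_both:
  assumes "card X = 2" "X \<inter> A \<noteq> {}"
    and "Y \<inter> X \<noteq> {}" "Y \<inter> A = {}" "W \<inter> X \<noteq> {}" "W \<inter> A = {}"
  shows "Y \<inter> W \<noteq> {}"
proof -
  obtain p q where "X = {p, q}" using assms(1) by (meson card_2_iff)
  then show ?thesis using assms(2-6) by auto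
qed

lemma line_graph_nbhd_outside_clique:
  assumes iso: "line_graph_iso V E f"
    and "v \<in> V" "x \<in> V" "E v x"
    and w: "w \<in> open_nbhd V E x - closed_nbhd V E v"
  shows "insert x (closed_nbhd V E x - closed_nbhd V E v) \<subseteq> closed_nbhd V E w"
proof
  have adj: "\<And>a b. a \<in> V \<Longrightarrow> b \<in> V \<Longrightarrow> E a b \<longleftrightarrow> a \<noteq> b \<and> f a \<inter> f b \<noteq> {}"
    using iso unfolding line_graph_iso_def by auto
  have "card (f x) = 2"
    using iso \<open>x \<in> V\<close> unfolding line_graph_iso_def by auto
  have wV: "w \<in> V" and "E x w" "w \<noteq> v" "\<not> E v w"
    using w unfolding open_nbhd_def closed_nbhd_def by auto
  have fw: "f w \<inter> f x \<noteq> {}" "f w \<inter> f v = {}"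
    using adj[OF \<open>x \<in> V\<close> wV] adj[OF \<open>v \<in> V\<close> wV] \<open>E x w\<close> \<open>w \<noteq> v\<close> \<open>\<not> E v w\<close>
    by (auto simp: Int_commute)
  have fx: "f x \<inter> f v \<noteq> {}"
    using adj[OF \<open>v \<in> V\<close> \<open>x \<in> V\<close>] \<open>E v x\<close> by blast
  fix y
  assume y: "y \<in> insert x (closed_nbhd V E x - closed_nbhd V E v)"
  show "y \<in> closed_nbhd V E w"
  proof (cases "y = x \<or> y = w")
    case True
    then show ?thesis
      using adj[OF \<open>x \<in> V\<close> wV] adj[OF wV \<open>x \<in> V\<close>] \<open>E x w\<close> \<open>x \<in> V\<close>
      unfolding closed_nbhd_def open_nbhd_def by auto
  next
    case False
    then have yV: "y \<in> V" and "E x y" "y \<noteq> v" "\<not> E v y"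
      using y unfolding open_nbhd_def closed_nbhd_def by auto
    then have "f y \<inter> f x \<noteq> {}" "f y \<inter> f v = {}"
      using adj[OF \<open>x \<in> V\<close> yV] adj[OF \<open>v \<in> V\<close> yV] by (auto simp: Int_commute)
    then have "f w \<inter> f y \<noteq> {}"
      using card_2_meets_both[OF \<open>card (f x) = 2\<close> fx _ _ fw] by blast
    then have "E w y"
      using adj[OF wV yV] False by blast
    then show ?thesis
      using yV unfolding closed_nbhd_def open_nbhd_def by auto
  qed
qed

theorem lemma5:
  fixes V :: "'a set" and E :: "'a \<Rightarrow> 'a \<Rightarrow> bool" and f :: "'a \<Rightarrow> 'b set"
    and D :: "'a set" and v u :: 'a and z :: "'a \<Rightarrow> 'a"
  assumes "simple_graph V E"
    and "line_graph_iso V E f"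
    and "minimal_dominating V E D"
    and "v \<in> D" and "\<forall>w\<in>D. \<not> E v w"
    and "E v u"
    and "\<forall>x \<in> private_nbrs V E D v - closed_nbhd V E u.
           z x \<in> open_nbhd V E x - closed_nbhd V E v"
  shows "closed_nbhd V E u \<union>
           (\<Union>x \<in> private_nbrs V E D v - closed_nbhd V E u.
              (closed_nbhd V E x - closed_nbhd V E v) \<union> {x})
         \<subseteq> closed_nbhd_set V E (z ` (private_nbrs V E D v - closed_nbhd V E u) \<union> {u})"
proof -
  have "v \<in> V" using assms(1,6) unfolding simple_graph_def by blast
  have "(closed_nbhd V E x - closed_nbhd V E v) \<union> {x} \<subseteq> closed_nbhd V E (z x)"
    if x: "x \<in> private_nbrs V E D v - closed_nbhd V E u" for x
  proof -
    have "x \<in> V" "E v x" using x unfolding private_nbrs_def open_nbhd_def by auto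
    then show ?thesis
      using line_graph_nbhd_outside_clique[OF assms(2) \<open>v \<in> V\<close>] x assms(7) by auto
  qed
  then show ?thesis unfolding closed_nbhd_set_def by blast
qed

end
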